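(* Let $\mathfrak a$ and $A$ be as in the context. Let $R$ be an $A$-module with a decreasing filtration by $A$-submodules $\cdots\supseteq{}^{i-1}R\supseteq{}^iR\supseteq{}^{i+1}R\supseteq\cdots$ such that ${}^iR=R$ for $i\ll0$, ${}^iR=0$ for $i\gg0$, and each ${}^iR/{}^{i+1}R$ is projective as an $\mathfrak a$-module. Let $N$ be an admissible hybrid $A$-module and $\phi:R\twoheadrightarrow N$ a surjective $A$-module homomorphism with $\phi({}^iR)=N_{\ge i}$ for every $i\in\mathbb Z$. Then there is a choice of $\mathfrak a_0$-submodules $h_i\subseteq{}^iR$, each an $\mathfrak a_0$-stable complement to ${}^{i+1}R+\mathrm{rad}^\flat({}^iR)$ in ${}^iR$, such that $\phi(h_i)\subseteq N_i$ for all $i$. The $\mathfrak a$-grading on $R$ obtained by placing $h_i$ in grade $i$ (so that $R=\mathfrak a h\cong\bigoplus_i\mathfrak a\otimes_{\mathfrak a_0}h_i$) makes $R$ an admissible hybrid $A$-module and $\phi$ a surjective morphism of admissible hybrid $A$-modules.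
   Context: All algebras/modules finite dimensional over a field. $\mathfrak a=\bigoplus_{n\ge0}\mathfrak a_n$ is positively graded and $\mathfrak a\to A$ is an algebra homomorphism such that $\mathfrak a_{\ge j}A$ is a two-sided ideal of $A$ for each $j\ge0$, where $\mathfrak a_{\ge j}=\bigoplus_{i\ge j}\mathfrak a_i$. For an $\mathfrak a$-module $X$, $\mathrm{rad}^\flat X=\mathfrak a_{\ge1}X$. A hybrid $A$-module is an $A$-module with a fixed grading making it a graded $\mathfrak a$-module (with $\mathfrak a$ acting via $\mathfrak a\to A$); it is admissible if each $N_{\ge j}=\bigoplus_{i\ge j}N_i$ is an $A$-submodule. Morphisms of hybrid modules are $A$-maps preserving gradings. *)

theory Defs
  imports Main "HOL.Vector_Spaces"
begin

(* The algebras a (graded)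
   and A are types 'a, 'b of class ring_1 equipped with k-scalar multiplications
   smA, smB.  An A-module is a type 'm::ab_group_add with an action
   act :: 'b => 'm => 'm; its k-structure is c.m = (c 1_A).m, and its a-module
   structure is x.m = (f x).m via the algebra homomorphism f : a -> A. *)

definition k_algebra :: "('k::field \<Rightarrow> 'a::ring_1 \<Rightarrow> 'a) \<Rightarrow> bool" where
  "k_algebra sm \<longleftrightarrow> vector_space sm
     \<and> (\<forall>c x y. sm c (x * y) = sm c x * y \<and> sm c (x * y) = x * sm c y)
     \<and> (\<exists>B. finite B \<and> module.span sm B = UNIV)"

definition alg_hom ::
  "('k::field \<Rightarrow> 'a::ring_1 \<Rightarrow> 'a) \<Rightarrow> ('k \<Rightarrow> 'b::ring_1 \<Rightarrow> 'b) \<Rightarrow> ('a \<Rightarrow> 'b) \<Rightarrow> bool" where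
  "alg_hom smA smB f \<longleftrightarrow> f 1 = 1 \<and> (\<forall>x y. f (x * y) = f x * f y)
     \<and> (\<forall>x y. f (x + y) = f x + f y) \<and> (\<forall>c x. f (smA c x) = smB c (f x))"

definition direct_decomp :: "('k::field \<Rightarrow> 'v::ab_group_add \<Rightarrow> 'v) \<Rightarrow> ('i \<Rightarrow> 'v set) \<Rightarrow> bool" where
  "direct_decomp sm G \<longleftrightarrow> (\<forall>i. module.subspace sm (G i))
     \<and> (\<forall>v. \<exists>!c. finite {i. c i \<noteq> 0} \<and> (\<forall>i. c i \<in> G i) \<and> v = sum c {i. c i \<noteq> 0})"

definition graded_algebra :: "('k::field \<Rightarrow> 'a::ring_1 \<Rightarrow> 'a) \<Rightarrow> (nat \<Rightarrow> 'a set) \<Rightarrow> bool" where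
  "graded_algebra smA ga \<longleftrightarrow> direct_decomp smA ga \<and> 1 \<in> ga 0
     \<and> (\<forall>i j. \<forall>x\<in>ga i. \<forall>y\<in>ga j. x * y \<in> ga (i + j))"

definition a_ge :: "('k::field \<Rightarrow> 'a::ring_1 \<Rightarrow> 'a) \<Rightarrow> (nat \<Rightarrow> 'a set) \<Rightarrow> nat \<Rightarrow> 'a set" where
  "a_ge smA ga j = module.span smA (\<Union>i\<in>{j..}. ga i)"

definition two_sided_ideal :: "('k::field \<Rightarrow> 'b::ring_1 \<Rightarrow> 'b) \<Rightarrow> 'b set \<Rightarrow> bool" where
  "two_sided_ideal smB I \<longleftrightarrow> module.subspace smB I
     \<and> (\<forall>a. \<forall>x\<in>I. a * x \<in> I \<and> x * a \<in> I)"

definition setting ::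
  "('k::field \<Rightarrow> 'a::ring_1 \<Rightarrow> 'a) \<Rightarrow> (nat \<Rightarrow> 'a set) \<Rightarrow> ('k \<Rightarrow> 'b::ring_1 \<Rightarrow> 'b) \<Rightarrow> ('a \<Rightarrow> 'b) \<Rightarrow> bool" where
  "setting smA ga smB f \<longleftrightarrow> k_algebra smA \<and> k_algebra smB \<and> graded_algebra smA ga
     \<and> alg_hom smA smB f
     \<and> (\<forall>j. two_sided_ideal smB (module.span smB {f x * b | x b. x \<in> a_ge smA ga j}))"

definition kscale :: "('k::field \<Rightarrow> 'b::ring_1 \<Rightarrow> 'b) \<Rightarrow> ('b \<Rightarrow> 'm \<Rightarrow> 'm) \<Rightarrow> 'k \<Rightarrow> 'm \<Rightarrow> 'm" where
  "kscale smB act c m = act (smB c 1) m"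

definition A_module :: "('k::field \<Rightarrow> 'b::ring_1 \<Rightarrow> 'b) \<Rightarrow> ('b \<Rightarrow> 'm::ab_group_add \<Rightarrow> 'm) \<Rightarrow> bool" where
  "A_module smB act \<longleftrightarrow> (\<forall>a b m. act (a * b) m = act a (act b m)) \<and> (\<forall>m. act 1 m = m)
     \<and> (\<forall>a b m. act (a + b) m = act a m + act b m) \<and> (\<forall>a m n. act a (m + n) = act a m + act a n)
     \<and> (\<exists>B. finite B \<and> module.span (kscale smB act) B = UNIV)"

text \<open>X is a submodule for the action of the elements of S (S = UNIV: A-submodule;
  S = f ` a_0: a_0-submodule).\<close>
definition submod :: "('b \<Rightarrow> 'm::ab_group_add \<Rightarrow> 'm) \<Rightarrow> 'b set \<Rightarrow> 'm set \<Rightarrow> bool" where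
  "submod act S X \<longleftrightarrow> 0 \<in> X \<and> (\<forall>x\<in>X. \<forall>y\<in>X. x + y \<in> X) \<and> (\<forall>a\<in>S. \<forall>x\<in>X. act a x \<in> X)"

definition set_plus :: "'m::ab_group_add set \<Rightarrow> 'm set \<Rightarrow> 'm set" where
  "set_plus X Y = {x + y | x y. x \<in> X \<and> y \<in> Y}"

definition rad_flat ::
  "('k::field \<Rightarrow> 'a::ring_1 \<Rightarrow> 'a) \<Rightarrow> (nat \<Rightarrow> 'a set) \<Rightarrow> ('k \<Rightarrow> 'b::ring_1 \<Rightarrow> 'b) \<Rightarrow> ('a \<Rightarrow> 'b)
    \<Rightarrow> ('b \<Rightarrow> 'm::ab_group_add \<Rightarrow> 'm) \<Rightarrow> 'm set \<Rightarrow> 'm set" where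
  "rad_flat smA ga smB f act X =
     module.span (kscale smB act) {act (f x) m | x m. x \<in> a_ge smA ga 1 \<and> m \<in> X}"

text \<open>The quotient a-module X/Y (Y \<subseteq> X submodules of an A-module, a acting via f) is
  projective, i.e. a direct summand of a free a-module a^n (finite rank suffices since
  everything is finite dimensional).  Homomorphisms X/Y -> a^n are encoded as
  a-linear maps s on X vanishing on Y, and homomorphisms a^n -> X/Y by a-linear lifts
  p : a^n -> X (which exist since a^n is free); the summand condition p o s = id on
  X/Y reads p (s m) - m \<in> Y.  Elements of a^n are functions nat => 'a supported on {..<n}.\<close>
definition free_mod :: "nat \<Rightarrow> (nat \<Rightarrow> 'a::ring_1) set" where
  "free_mod n = {v. \<forall>k\<ge>n. v k = 0}"

definition projective_quotient ::
  "(nat \<Rightarrow> 'a::ring_1 set) \<Rightarrow> ('a \<Rightarrow> 'b::ring_1) \<Rightarrow> ('b \<Rightarrow> 'm::ab_group_add \<Rightarrow> 'm)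
     \<Rightarrow> 'm set \<Rightarrow> 'm set \<Rightarrow> bool" where
  "projective_quotient ga f act X Y \<longleftrightarrow>
     (\<exists>n s p.
        (\<forall>m\<in>X. s m \<in> free_mod n)
      \<and> (\<forall>m\<in>X. \<forall>m'\<in>X. s (m + m') = (\<lambda>k. s m k + s m' k))
      \<and> (\<forall>x m. m \<in> X \<longrightarrow> s (act (f x) m) = (\<lambda>k. x * s m k))
      \<and> (\<forall>m\<in>Y. s m = (\<lambda>k. 0))
      \<and> (\<forall>v\<in>free_mod n. p v \<in> X)
      \<and> (\<forall>v\<in>free_mod n. \<forall>w\<in>free_mod n. p (\<lambda>k. v k + w k) = p v + p w)
      \<and> (\<forall>x. \<forall>v\<in>free_mod n. p (\<lambda>k. x * v k) = act (f x) (p v))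
      \<and> (\<forall>m\<in>X. p (s m) - m \<in> Y))"

definition hybrid ::
  "('k::field \<Rightarrow> 'a::ring_1 \<Rightarrow> 'a) \<Rightarrow> (nat \<Rightarrow> 'a set) \<Rightarrow> ('k \<Rightarrow> 'b::ring_1 \<Rightarrow> 'b) \<Rightarrow> ('a \<Rightarrow> 'b)
    \<Rightarrow> ('b \<Rightarrow> 'm::ab_group_add \<Rightarrow> 'm) \<Rightarrow> (int \<Rightarrow> 'm set) \<Rightarrow> bool" where
  "hybrid smA ga smB f act G \<longleftrightarrow> A_module smB act \<and> direct_decomp (kscale smB act) G
     \<and> (\<forall>j i. \<forall>x\<in>ga j. \<forall>m\<in>G i. act (f x) m \<in> G (int j + i))"

definition grade_ge :: "('k::field \<Rightarrow> 'b::ring_1 \<Rightarrow> 'b) \<Rightarrow> ('b \<Rightarrow> 'm::ab_group_add \<Rightarrow> 'm)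
    \<Rightarrow> (int \<Rightarrow> 'm set) \<Rightarrow> int \<Rightarrow> 'm set" where
  "grade_ge smB act G j = module.span (kscale smB act) (\<Union>i\<in>{j..}. G i)"

definition admissible_hybrid ::
  "('k::field \<Rightarrow> 'a::ring_1 \<Rightarrow> 'a) \<Rightarrow> (nat \<Rightarrow> 'a set) \<Rightarrow> ('k \<Rightarrow> 'b::ring_1 \<Rightarrow> 'b) \<Rightarrow> ('a \<Rightarrow> 'b)
    \<Rightarrow> ('b \<Rightarrow> 'm::ab_group_add \<Rightarrow> 'm) \<Rightarrow> (int \<Rightarrow> 'm set) \<Rightarrow> bool" where
  "admissible_hybrid smA ga smB f act G \<longleftrightarrow> hybrid smA ga smB f act G
     \<and> (\<forall>j. submod act UNIV (grade_ge smB act G j))"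

definition A_hom :: "('b \<Rightarrow> 'm::ab_group_add \<Rightarrow> 'm) \<Rightarrow> ('b \<Rightarrow> 'n::ab_group_add \<Rightarrow> 'n) \<Rightarrow> ('m \<Rightarrow> 'n) \<Rightarrow> bool" where
  "A_hom actM actN \<phi> \<longleftrightarrow> (\<forall>m m'. \<phi> (m + m') = \<phi> m + \<phi> m') \<and> (\<forall>a m. \<phi> (actM a m) = actN a (\<phi> m))"

definition hybrid_morphism ::
  "('b \<Rightarrow> 'm::ab_group_add \<Rightarrow> 'm) \<Rightarrow> (int \<Rightarrow> 'm set) \<Rightarrow> ('b \<Rightarrow> 'n::ab_group_add \<Rightarrow> 'n) \<Rightarrow> (int \<Rightarrow> 'n set)
    \<Rightarrow> ('m \<Rightarrow> 'n) \<Rightarrow> bool" where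
  "hybrid_morphism actM GM actN GN \<phi> \<longleftrightarrow> A_hom actM actN \<phi> \<and> (\<forall>i. \<phi> ` GM i \<subseteq> GN i)"

definition grading_from ::
  "(nat \<Rightarrow> 'a::ring_1 set) \<Rightarrow> ('k::field \<Rightarrow> 'b::ring_1 \<Rightarrow> 'b) \<Rightarrow> ('a \<Rightarrow> 'b)
    \<Rightarrow> ('b \<Rightarrow> 'm::ab_group_add \<Rightarrow> 'm) \<Rightarrow> (int \<Rightarrow> 'm set) \<Rightarrow> int \<Rightarrow> 'm set" where
  "grading_from ga smB f act h n = module.span (kscale smB act)
     {act (f x) m | x m i. i \<le> n \<and> x \<in> ga (nat (n - i)) \<and> m \<in> h i}"

end

theory Submission
  imports Defs
begin

text \<open>
  By projectivity of \<open>FR i / FR (i + 1)\<close> there are an \<open>a\<close>-linear coordinate map \<open>s : FR i \<rightarrow> a\<^sup>n\<close>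
  vanishing on \<open>FR (i + 1)\<close> and a lift \<open>p : a\<^sup>n \<rightarrow> FR i\<close> with \<open>p \<circ> s = id\<close> modulo \<open>FR (i + 1)\<close>.
  Since \<open>\<phi> (FR i) = N\<^sub>\<ge>\<^sub>i = N\<^sub>i + \<phi> (FR (i + 1))\<close>, the lift can be corrected by a map into \<open>FR (i + 1)\<close>
  so that it sends the standard basis into \<open>N\<^sub>i\<close>. The complement \<open>h\<^sub>i\<close> is then the lift of the
  degree-0 parts of the coordinates. The subspaces \<open>a\<^sub>j h\<^sub>i\<close> are independent: in a relation, the
  coordinates at the lowest filtration level, read in the lowest degree, kill the leading term.
  They span \<open>R\<close> by downward induction on \<open>i\<close>, because \<open>a\<^sub>\<ge>\<^sub>1\<close> is nilpotent. Admissibility of the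
  resulting grading comes from \<open>a\<^sub>\<ge>\<^sub>j A\<close> being an ideal, and \<open>\<phi>\<close> is graded since \<open>\<phi> (h\<^sub>i) \<subseteq> N\<^sub>i\<close>.
\<close>

section \<open>Modules over an algebra\<close>

lemma A_moduleD:
  assumes "A_module smB act"
  shows act_mult: "act (a * b) m = act a (act b m)"
    and act_one: "act 1 m = m"
    and act_add_left: "act (a + b) m = act a m + act b m"
    and act_add_right: "act a (m + n) = act a m + act a n"
  using assms unfolding A_module_def by auto

lemma A_module_act_zero_minus:
  fixes act :: "'b::ring_1 \<Rightarrow> 'm::ab_group_add \<Rightarrow> 'm"
  assumes "A_module smB act"
  shows act_zero_left: "act 0 m = 0"
    and act_zero_right: "act a 0 = 0"
    and act_minus_left: "act (- a) m = - act a m"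
    and act_diff_right: "act a (m - n) = act a m - act a n"
proof -
  show zero: "act 0 m = 0" using act_add_left[OF assms, of 0 0 m] by simp
  show "act a 0 = 0" using act_add_right[OF assms, of a 0 0] by simp
  have "act (- a) m + act a m = 0" using act_add_left[OF assms, of "- a" a m] zero by simp
  then show "act (- a) m = - act a m" by (simp add: eq_neg_iff_add_eq_0)
  show "act a (m - n) = act a m - act a n"
    using act_add_right[OF assms, of a "m - n" n] by (simp add: eq_diff_eq)
qed

lemma act_sum_right:
  fixes act :: "'b::ring_1 \<Rightarrow> 'm::ab_group_add \<Rightarrow> 'm"
  assumes "A_module smB act"
  shows "act a (sum g S) = (\<Sum>x\<in>S. act a (g x))"
  by (induct S rule: infinite_finite_induct)
    (simp_all add: act_zero_right[OF assms] act_add_right[OF assms])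

lemma kscale_vector_space:
  assumes vs: "vector_space smB"
    and alg: "\<forall>c x y. smB c (x * y) = smB c x * y \<and> smB c (x * y) = x * smB c y"
    and am: "A_module smB act"
  shows "vector_space (kscale smB act)"
proof -
  interpret B: vector_space smB by (rule vs)
  have m: "smB a 1 * smB b 1 = smB (a * b) 1" for a b
    using alg by (metis B.scale_scale mult_1)
  show ?thesis
    unfolding vector_space_def kscale_def
    by (auto simp: act_add_right[OF am] act_add_left[OF am, symmetric] B.scale_left_distrib
          act_mult[OF am, symmetric] m act_one[OF am])
qed

lemma submod_uminus:
  assumes am: "A_module smB act" and "submod act UNIV X" and "x \<in> X"
  shows "- x \<in> X"
proof -
  have "act (-1) x \<in> X" using assms unfolding submod_def by auto
  then show ?thesis by (simp add: act_minus_left[OF am] act_one[OF am])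
qed

lemma submod_diff:
  assumes am: "A_module smB act" and "submod act UNIV X" and "x \<in> X" "y \<in> X"
  shows "x - y \<in> X"
  using submod_uminus[OF am assms(2) assms(4)] assms(2,3) unfolding submod_def
  by (metis diff_conv_add_uminus)

lemma submod_sum:
  assumes "submod act S X" and "\<And>i. i \<in> I \<Longrightarrow> g i \<in> X"
  shows "sum g I \<in> X"
  using assms(2) by (induct I rule: infinite_finite_induct) (use assms(1) in \<open>auto simp: submod_def\<close>)

lemma submod_subspace:
  assumes "module (kscale smB act)" "submod act UNIV X"
  shows "module.subspace (kscale smB act) X"
  using assms unfolding submod_def module.subspace_def[OF assms(1)] kscale_def by auto

context module
begin

lemma span_UN_decomp:
  assumes "x \<in> span (\<Union>i\<in>I. S i)"
  shows "\<exists>F g. finite F \<and> F \<subseteq> I \<and> (\<forall>i\<in>F. g i \<in> span (S i)) \<and> x = sum g F"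
  using assms
proof (induct rule: span_induct_alt)
  case base then show ?case by (intro exI[of _ "{}"]) auto
next
  case (step c x y)
  then obtain i where i: "i \<in> I" "x \<in> S i" by auto
  from step obtain F g where Fg: "finite F" "F \<subseteq> I" "\<forall>i\<in>F. g i \<in> span (S i)" "y = sum g F"
    by auto
  define g' where "g' = g(i := (if i \<in> F then g i else 0) + c *s x)"
  have "c *s x + y = sum g' (insert i F)"
  proof (cases "i \<in> F")
    case True
    then have "sum g' (insert i F) = g' i + sum g' (F - {i})"
      using Fg(1) by (simp add: insert_absorb sum.remove)
    also have "sum g' (F - {i}) = sum g (F - {i})" unfolding g'_def by (rule sum.cong) auto
    finally show ?thesis
      using True Fg(1,4) by (simp add: g'_def sum.remove add.commute add.left_commute)
  next
    case False
    then have "sum g' (insert i F) = g' i + sum g' F" using Fg(1) by simp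
    also have "sum g' F = sum g F" unfolding g'_def using False by (intro sum.cong) auto
    finally show ?thesis using False Fg(4) by (simp add: g'_def)
  qed
  moreover have "g' j \<in> span (S j)" if "j \<in> insert i F" for j
  proof -
    have "(if i \<in> F then g i else 0) + c *s x \<in> span (S i)"
      using Fg(3) i by (auto intro: span_add span_scale span_base span_zero)
    then show ?thesis using that Fg(3) unfolding g'_def by (cases "j = i") auto
  qed
  ultimately show ?case using Fg i by (intro exI[of _ "insert i F"] exI[of _ g']) auto
qed

lemma subspace_set_plus: "subspace S \<Longrightarrow> subspace T \<Longrightarrow> subspace (set_plus S T)"
  unfolding set_plus_def
  apply (intro subspaceI)
    apply (metis (mono_tags, lifting) add_0 mem_Collect_eq subspace_0)
   apply (smt (verit, best) add.assoc add.left_commute mem_Collect_eq subspace_add)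
  by (smt (verit, best) mem_Collect_eq scale_right_distrib subspace_scale)

lemma set_plus_add_left:
  assumes "subspace S" "a \<in> S" "b \<in> set_plus S T"
  shows "a + b \<in> set_plus S T"
proof -
  obtain x y where "b = x + y" "x \<in> S" "y \<in> T" using assms(3) unfolding set_plus_def by blast
  then have "a + b = (a + x) + y" "a + x \<in> S" using subspace_add[OF assms(1,2)] by (auto simp: add.assoc)
  then show ?thesis unfolding set_plus_def using \<open>y \<in> T\<close> by blast
qed

lemma span_ge_split:
  fixes G :: "int \<Rightarrow> 'b set"
  assumes sub: "\<And>j. subspace (G j)"
  shows "span (\<Union>j\<in>{i..}. G j) \<subseteq> {g + z | g z. g \<in> G i \<and> z \<in> span (\<Union>j\<in>{i + 1..}. G j)}"
proof (rule span_minimal)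
  show "subspace {g + z | g z. g \<in> G i \<and> z \<in> span (\<Union>j\<in>{i + 1..}. G j)}"
    using subspace_set_plus[OF sub subspace_span] by (simp add: set_plus_def)
  show "(\<Union>j\<in>{i..}. G j) \<subseteq> {g + z | g z. g \<in> G i \<and> z \<in> span (\<Union>j\<in>{i + 1..}. G j)}"
  proof
    fix y assume "y \<in> (\<Union>j\<in>{i..}. G j)"
    then obtain j where j: "i \<le> j" "y \<in> G j" by auto
    show "y \<in> {g + z | g z. g \<in> G i \<and> z \<in> span (\<Union>j\<in>{i + 1..}. G j)}"
    proof (cases "j = i")
      case True
      then show ?thesis using j span_zero by (intro CollectI exI[of _ y] exI[of _ 0]) auto
    next
      case False
      then have "y \<in> span (\<Union>j\<in>{i + 1..}. G j)" using j by (intro span_base) auto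
      then show ?thesis using subspace_0[OF sub] by (intro CollectI exI[of _ 0] exI[of _ y]) auto
    qed
  qed
qed

lemma span_UN_finite_support:
  assumes sub: "\<And>i. subspace (G i)" and v: "v \<in> span (\<Union>i. G i)"
  shows "\<exists>c. finite {i. c i \<noteq> 0} \<and> (\<forall>i. c i \<in> G i) \<and> v = sum c {i. c i \<noteq> 0}"
proof -
  obtain F g where Fg: "finite F" "\<forall>i\<in>F. g i \<in> span (G i)" "v = sum g F"
    using span_UN_decomp[of v G UNIV] v by auto
  define c where "c i = (if i \<in> F then g i else 0)" for i
  have sub_F: "{i. c i \<noteq> 0} \<subseteq> F" unfolding c_def by auto
  have "sum c {i. c i \<noteq> 0} = sum c F" by (rule sum.mono_neutral_left[OF Fg(1) sub_F]) auto
  also have "\<dots> = v" unfolding c_def Fg(3) by (rule sum.cong) auto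
  moreover have "c i \<in> G i" for i
    using Fg(2) subspace_0[OF sub] span_eq_iff[THEN iffD2, OF sub] unfolding c_def by auto
  ultimately show ?thesis using finite_subset[OF sub_F Fg(1)] by auto
qed

lemma finite_support_decomp_unique:
  assumes sub: "\<And>i. subspace (G i)"
    and indep: "\<And>D c. finite D \<Longrightarrow> (\<And>i. i \<in> D \<Longrightarrow> c i \<in> G i) \<Longrightarrow> sum c D = 0
                  \<Longrightarrow> \<forall>i\<in>D. c i = 0"
    and c: "finite {i. c i \<noteq> 0}" "\<And>i. c i \<in> G i"
    and c': "finite {i. c' i \<noteq> 0}" "\<And>i. c' i \<in> G i"
    and eq: "sum c {i. c i \<noteq> 0} = sum c' {i. c' i \<noteq> 0}"
  shows "c' = c"
proof
  fix i
  define D where "D = {i. c i \<noteq> 0} \<union> {i. c' i \<noteq> 0}"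
  have D: "finite D" unfolding D_def using c c' by auto
  have "sum c {i. c i \<noteq> 0} = sum c D" by (rule sum.mono_neutral_left[OF D]) (auto simp: D_def)
  moreover have "sum c' {i. c' i \<noteq> 0} = sum c' D"
    by (rule sum.mono_neutral_left[OF D]) (auto simp: D_def)
  ultimately have "sum c' D - sum c D = 0" using eq by simp
  then have "sum (\<lambda>i. c' i - c i) D = 0" by (simp only: sum_subtractf)
  moreover have "c' i - c i \<in> G i" for i using c c' subspace_diff[OF sub] by blast
  ultimately have zero: "\<forall>i\<in>D. c' i - c i = 0" by (rule indep[OF D, rotated])
  show "c' i = c i"
  proof (cases "i \<in> D")
    case True
    then show ?thesis using zero by simp
  next
    case False
    then show ?thesis by (simp add: D_def)
  qed
qed

end

context vector_space
begin

lemma direct_decompI: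
  assumes sub: "\<And>i. subspace (G i)"
    and gen: "\<And>v. v \<in> span (\<Union>i. G i)"
    and indep: "\<And>D c. finite D \<Longrightarrow> (\<And>i. i \<in> D \<Longrightarrow> c i \<in> G i) \<Longrightarrow> sum c D = 0
                  \<Longrightarrow> \<forall>i\<in>D. c i = 0"
  shows "direct_decomp scale G"
  unfolding direct_decomp_def
proof (intro conjI allI sub)
  fix v
  obtain c where c: "finite {i. c i \<noteq> 0}" "\<forall>i. c i \<in> G i" "v = sum c {i. c i \<noteq> 0}"
    using span_UN_finite_support[OF sub gen] by blast
  show "\<exists>!c. finite {i. c i \<noteq> 0} \<and> (\<forall>i. c i \<in> G i) \<and> v = sum c {i. c i \<noteq> 0}"
  proof (rule ex1I[of _ c])
    show "finite {i. c i \<noteq> 0} \<and> (\<forall>i. c i \<in> G i) \<and> v = sum c {i. c i \<noteq> 0}" using c by blast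
    fix c' assume "finite {i. c' i \<noteq> 0} \<and> (\<forall>i. c' i \<in> G i) \<and> v = sum c' {i. c' i \<noteq> 0}"
    then show "c' = c" using c by (intro finite_support_decomp_unique[OF sub indep]) auto
  qed
qed

end

section \<open>Positively graded finite-dimensional algebras\<close>

definition hcomp :: "(nat \<Rightarrow> 'a::ring_1 set) \<Rightarrow> 'a \<Rightarrow> nat \<Rightarrow> 'a" where
  "hcomp ga x = (THE c. finite {i. c i \<noteq> 0} \<and> (\<forall>i. c i \<in> ga i) \<and> x = sum c {i. c i \<noteq> 0})"

locale graded_fd_algebra =
  fixes smA :: "'k::field \<Rightarrow> 'a::ring_1 \<Rightarrow> 'a" and ga :: "nat \<Rightarrow> 'a set"
  assumes vsA: "vector_space smA" and ddA: "direct_decomp smA ga" and one_ga0: "1 \<in> ga 0"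
    and ga_mult: "\<And>i j x y. x \<in> ga i \<Longrightarrow> y \<in> ga j \<Longrightarrow> x * y \<in> ga (i + j)"
    and smA_mult_left: "\<And>c x y. smA c (x * y) = smA c x * y"
    and smA_mult_right: "\<And>c x y. smA c (x * y) = x * smA c y"
    and finA: "\<exists>B. finite B \<and> module.span smA B = UNIV"
begin

sublocale A: vector_space smA by (rule vsA)

lemma ga_subspace: "A.subspace (ga i)"
  using ddA unfolding direct_decomp_def by auto

lemma ga_zero[simp]: "0 \<in> ga i" using A.subspace_0[OF ga_subspace] .
lemma ga_add: "x \<in> ga i \<Longrightarrow> y \<in> ga i \<Longrightarrow> x + y \<in> ga i" using A.subspace_add[OF ga_subspace] .
lemma ga_scale: "x \<in> ga i \<Longrightarrow> smA c x \<in> ga i" using A.subspace_scale[OF ga_subspace] .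

lemma hcomp_ex1: "\<exists>!c. finite {i. c i \<noteq> 0} \<and> (\<forall>i. c i \<in> ga i) \<and> x = sum c {i. c i \<noteq> 0}"
  using ddA unfolding direct_decomp_def by auto

lemma hcomp:
  shows hcomp_finite: "finite {i. hcomp ga x i \<noteq> 0}"
    and hcomp_in: "hcomp ga x i \<in> ga i"
    and sum_hcomp: "x = sum (hcomp ga x) {i. hcomp ga x i \<noteq> 0}"
  using theI'[OF hcomp_ex1[of x]] unfolding hcomp_def by auto

lemma hcomp_unique:
  assumes "finite S" "\<And>i. c i \<in> ga i" "\<And>i. i \<notin> S \<Longrightarrow> c i = 0" "x = sum c S"
  shows "hcomp ga x = c"
proof -
  have sub: "{i. c i \<noteq> 0} \<subseteq> S" using assms(3) by auto
  have "sum c S = sum c {i. c i \<noteq> 0}"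
    by (rule sum.mono_neutral_right[OF assms(1) sub]) auto
  then have "finite {i. c i \<noteq> 0} \<and> (\<forall>i. c i \<in> ga i) \<and> x = sum c {i. c i \<noteq> 0}"
    using finite_subset[OF sub assms(1)] assms by auto
  then show ?thesis unfolding hcomp_def by (rule the1_equality[OF hcomp_ex1])
qed

lemma sum_hcomp_superset:
  assumes "finite S" "{i. hcomp ga x i \<noteq> 0} \<subseteq> S"
  shows "x = sum (hcomp ga x) S"
proof -
  have "sum (hcomp ga x) S = sum (hcomp ga x) {i. hcomp ga x i \<noteq> 0}"
    by (rule sum.mono_neutral_right[OF assms]) auto
  then show ?thesis using sum_hcomp by metis
qed

lemma hcomp_homogeneous: "x \<in> ga j \<Longrightarrow> hcomp ga x = (\<lambda>i. if i = j then x else 0)"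
  by (rule hcomp_unique[of "{j}"]) auto

lemma hcomp_zero[simp]: "hcomp ga 0 i = 0"
  using hcomp_homogeneous[OF ga_zero, of 0] by simp

lemma hcomp_add: "hcomp ga (x + y) i = hcomp ga x i + hcomp ga y i"
proof -
  let ?S = "{i. hcomp ga x i \<noteq> 0} \<union> {i. hcomp ga y i \<noteq> 0}"
  have S: "finite ?S" using hcomp_finite by auto
  have "hcomp ga (x + y) = (\<lambda>i. hcomp ga x i + hcomp ga y i)"
  proof (rule hcomp_unique[OF S])
    show "hcomp ga x i + hcomp ga y i \<in> ga i" for i using hcomp_in ga_add by auto
    show "i \<notin> ?S \<Longrightarrow> hcomp ga x i + hcomp ga y i = 0" for i by auto
    have "x = sum (hcomp ga x) ?S" "y = sum (hcomp ga y) ?S" using sum_hcomp_superset S by auto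
    then show "x + y = (\<Sum>i\<in>?S. hcomp ga x i + hcomp ga y i)" by (simp add: sum.distrib)
  qed
  then show ?thesis by simp
qed

lemma hcomp_scale: "hcomp ga (smA c x) i = smA c (hcomp ga x i)"
proof -
  have "hcomp ga (smA c x) = (\<lambda>i. smA c (hcomp ga x i))"
  proof (rule hcomp_unique[OF hcomp_finite])
    show "smA c (hcomp ga x i) \<in> ga i" for i using hcomp_in ga_scale by auto
    show "i \<notin> {i. hcomp ga x i \<noteq> 0} \<Longrightarrow> smA c (hcomp ga x i) = 0" for i by auto
    show "smA c x = (\<Sum>i\<in>{i. hcomp ga x i \<noteq> 0}. smA c (hcomp ga x i))"
      by (subst sum_hcomp) (simp add: A.scale_sum_right)
  qed
  then show ?thesis by simp
qed

lemma hcomp_diff: "hcomp ga (x - y) i = hcomp ga x i - hcomp ga y i"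
  using hcomp_add[of "x - y" y i] by (simp add: eq_diff_eq)

lemma hcomp_sum: "hcomp ga (sum g J) i = (\<Sum>j\<in>J. hcomp ga (g j) i)"
  by (induct J rule: infinite_finite_induct) (simp_all add: hcomp_add)

lemma hcomp_mult_homogeneous:
  assumes x: "x \<in> ga j"
  shows "hcomp ga (x * y) i = (if j \<le> i then x * hcomp ga y (i - j) else 0)"
proof -
  let ?T = "{i. hcomp ga y i \<noteq> 0}"
  let ?S = "(\<lambda>d. d + j) ` ?T"
  have "hcomp ga (x * y) = (\<lambda>i. if j \<le> i then x * hcomp ga y (i - j) else 0)"
  proof (rule hcomp_unique)
    show "finite ?S" using hcomp_finite by auto
    show "(if j \<le> i then x * hcomp ga y (i - j) else 0) \<in> ga i" for i
      using ga_mult[OF x hcomp_in[of y "i - j"]] by auto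
    show "i \<notin> ?S \<Longrightarrow> (if j \<le> i then x * hcomp ga y (i - j) else 0) = 0" for i
      by (cases "j \<le> i") (auto simp: image_iff dest: spec[of _ "i - j"])
    have "(\<Sum>i\<in>?S. if j \<le> i then x * hcomp ga y (i - j) else 0) = (\<Sum>d\<in>?T. x * hcomp ga y d)"
      by (subst sum.reindex) (auto simp: inj_on_def)
    also have "\<dots> = x * y" by (subst (2) sum_hcomp) (simp add: sum_distrib_left)
    finally show "x * y = (\<Sum>i\<in>?S. if j \<le> i then x * hcomp ga y (i - j) else 0)" by simp
  qed
  then show ?thesis by simp
qed

lemma hcomp_mult_ga0: "x \<in> ga 0 \<Longrightarrow> hcomp ga (x * y) i = x * hcomp ga y i"
  using hcomp_mult_homogeneous by simp

lemma a_ge0: "a_ge smA ga 0 = UNIV"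
proof -
  have "x \<in> a_ge smA ga 0" for x
    unfolding a_ge_def by (subst sum_hcomp, rule A.span_sum, rule A.span_base) (blast intro: hcomp_in)
  then show ?thesis by auto
qed

lemma ga_in_a_ge: "x \<in> ga d \<Longrightarrow> t \<le> d \<Longrightarrow> x \<in> a_ge smA ga t"
  unfolding a_ge_def by (auto intro!: A.span_base)

lemma smA_eq_mult: "smA c x = smA c 1 * x"
  using smA_mult_left[of c 1 x] by simp

lemma hcomp_a_ge_mult:
  assumes "x \<in> a_ge smA ga t" "i < t" shows "hcomp ga (x * y) i = 0"
  using assms(1) unfolding a_ge_def
proof (induct rule: A.span_induct_alt)
  case (step c x z)
  then obtain d where "x \<in> ga d" "t \<le> d" by auto
  moreover have "smA c x * y = smA c (x * y)" by (simp add: smA_mult_left)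
  ultimately show ?case using step assms(2)
    by (simp add: distrib_right hcomp_add hcomp_scale hcomp_mult_homogeneous)
qed simp

lemma a_ge_mult:
  assumes "x \<in> a_ge smA ga t" "y \<in> a_ge smA ga u" shows "x * y \<in> a_ge smA ga (t + u)"
  using assms(1) unfolding a_ge_def
proof (induct rule: A.span_induct_alt)
  case base then show ?case by (simp add: A.span_zero)
next
  case (step c x z)
  then obtain d where d: "x \<in> ga d" "t \<le> d" by auto
  have "x * y \<in> A.span (\<Union> (ga ` {t + u..}))"
    using assms(2) unfolding a_ge_def
  proof (induct rule: A.span_induct_alt)
    case base then show ?case by (simp add: A.span_zero)
  next
    case (step c' y' w)
    then obtain d' where d': "y' \<in> ga d'" "u \<le> d'" by auto
    have "x * (smA c' y' + w) = smA c' (x * y') + x * w" by (simp add: distrib_left smA_mult_right)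
    moreover have "x * y' \<in> A.span (\<Union> (ga ` {t + u..}))"
      using ga_mult[OF d(1) d'(1)] d d' by (intro A.span_base UN_I[of "d + d'"]) auto
    ultimately show ?case using step by (auto intro!: A.span_add A.span_scale)
  qed
  moreover have "(smA c x + z) * y = smA c (x * y) + z * y" by (simp add: distrib_right smA_mult_left)
  ultimately show ?case using step by (auto intro!: A.span_add A.span_scale)
qed

lemma minus_hcomp0_in_a_ge1: "x - hcomp ga x 0 \<in> a_ge smA ga 1"
proof -
  let ?S = "{i. hcomp ga x i \<noteq> 0}"
  have "x = sum (hcomp ga x) (insert 0 ?S)" by (rule sum_hcomp_superset) (auto simp: hcomp_finite)
  also have "\<dots> = hcomp ga x 0 + sum (hcomp ga x) (?S - {0})"
    by (simp add: hcomp_finite sum.insert_remove)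
  finally have "x - hcomp ga x 0 = sum (hcomp ga x) (?S - {0})" by (simp add: algebra_simps)
  also have "\<dots> \<in> a_ge smA ga 1"
    unfolding a_ge_def by (rule A.span_sum, rule A.span_base) (auto intro: hcomp_in)
  finally show ?thesis .
qed

text \<open>Finite dimensionality bounds the degrees that occur, so \<open>a\<^sub>\<ge>\<^sub>1\<close> is nilpotent.\<close>

lemma ga_eventually_zero: "\<exists>D. \<forall>d\<ge>D. ga d = {0}"
proof -
  obtain B where B: "finite B" "A.span B = UNIV" using finA by auto
  have "finite (\<Union>b\<in>B. {i. hcomp ga b i \<noteq> 0})" using B(1) hcomp_finite by blast
  then obtain D where D: "\<And>b i. b \<in> B \<Longrightarrow> hcomp ga b i \<noteq> 0 \<Longrightarrow> i < D"
    unfolding finite_nat_set_iff_bounded by blast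
  have hcomp_high: "hcomp ga x d = 0" if "D \<le> d" for x d
  proof -
    have "x \<in> A.span B" using B by auto
    then show ?thesis
    proof (induct rule: A.span_induct_alt)
      case (step c b y)
      have "hcomp ga b d = 0" using D[OF step(1), of d] that by linarith
      then show ?case using step by (simp add: hcomp_add hcomp_scale)
    qed simp
  qed
  have "ga d = {0}" if "D \<le> d" for d
  proof -
    have "x = 0" if "x \<in> ga d" for x
      using hcomp_homogeneous[OF that] hcomp_high[OF \<open>D \<le> d\<close>, of x] by simp
    then show ?thesis by auto
  qed
  then show ?thesis by blast
qed

lemma a_ge_eventually_zero: "\<exists>D. a_ge smA ga D = {0}"
proof -
  obtain D where D: "\<forall>d\<ge>D. ga d = {0}" using ga_eventually_zero by auto
  have "a_ge smA ga D \<subseteq> {0}" unfolding a_ge_def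
    using D by (intro A.span_minimal) (auto simp: A.subspace_single_0)
  then show ?thesis using A.span_zero unfolding a_ge_def by blast
qed

end

section \<open>Filtered covers of admissible hybrid modules\<close>

definition unit_vec :: "nat \<Rightarrow> nat \<Rightarrow> 'a::ring_1" where
  "unit_vec k = (\<lambda>l. if l = k then 1 else 0)"

lemma unit_vec_free_mod: "k < n \<Longrightarrow> unit_vec k \<in> free_mod n"
  unfolding unit_vec_def free_mod_def by auto

lemma free_mod_mult: "v \<in> free_mod n \<Longrightarrow> (\<lambda>k. x * v k) \<in> free_mod n"
  and free_mod_zero: "(\<lambda>k. 0) \<in> free_mod n"
  and free_mod_map: "v \<in> free_mod n \<Longrightarrow> g 0 = 0 \<Longrightarrow> (\<lambda>k. g (v k)) \<in> free_mod n"
  unfolding free_mod_def by auto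

lemma free_mod_sum: "(\<And>k. k \<in> K \<Longrightarrow> w k \<in> free_mod n) \<Longrightarrow> (\<lambda>l. \<Sum>k\<in>K. w k l) \<in> free_mod n"
  unfolding free_mod_def by (auto intro: sum.neutral)

lemma free_mod_unit_vec_expansion: "v \<in> free_mod n \<Longrightarrow> (\<lambda>l. \<Sum>k<n. v k * unit_vec k l) = v"
  unfolding free_mod_def unit_vec_def by (auto simp: if_distrib not_less cong: if_cong)

locale filtered_cover = graded_fd_algebra smA ga
  for smA :: "'k::field \<Rightarrow> 'a::ring_1 \<Rightarrow> 'a" and ga :: "nat \<Rightarrow> 'a set" +
  fixes smB :: "'k \<Rightarrow> 'b::ring_1 \<Rightarrow> 'b"
    and f :: "'a \<Rightarrow> 'b"
    and actR :: "'b \<Rightarrow> 'r::ab_group_add \<Rightarrow> 'r"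
    and FR :: "int \<Rightarrow> 'r set"
    and actN :: "'b \<Rightarrow> 'n::ab_group_add \<Rightarrow> 'n"
    and GN :: "int \<Rightarrow> 'n set"
    and \<phi> :: "'r \<Rightarrow> 'n"
  assumes vsB: "vector_space smB"
    and smB_mult_left: "\<And>c x y. smB c (x * y) = smB c x * y"
    and smB_mult_right: "\<And>c x y. smB c (x * y) = x * smB c y"
    and f_alg_hom: "alg_hom smA smB f"
    and ideal: "\<forall>j. two_sided_ideal smB (module.span smB {f x * b | x b. x \<in> a_ge smA ga j})"
    and R_mod: "A_module smB actR"
    and filt_sub: "\<forall>i. submod actR UNIV (FR i)"
    and filt_dec: "\<forall>i. FR (i + 1) \<subseteq> FR i"
    and filt_low: "\<exists>i0. \<forall>i\<le>i0. FR i = UNIV"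
    and filt_high: "\<exists>i1. \<forall>i\<ge>i1. FR i = {0}"
    and filt_proj: "\<forall>i. projective_quotient ga f actR (FR i) (FR (i + 1))"
    and N_adm: "admissible_hybrid smA ga smB f actN GN"
    and phi_hom: "A_hom actR actN \<phi>"
    and phi_filt: "\<forall>i. \<phi> ` FR i = grade_ge smB actN GN i"
begin

sublocale B: vector_space smB by (rule vsB)

abbreviation "kR \<equiv> kscale smB actR"
abbreviation "kN \<equiv> kscale smB actN"

lemma N_mod: "A_module smB actN"
  and N_direct_decomp: "direct_decomp kN GN"
  and N_graded: "x \<in> ga j \<Longrightarrow> m \<in> GN i \<Longrightarrow> actN (f x) m \<in> GN (int j + i)"
  using N_adm unfolding admissible_hybrid_def hybrid_def by auto

sublocale R: vector_space kR by (rule kscale_vector_space[OF vsB _ R_mod]) (metis smB_mult_left smB_mult_right)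
sublocale N: vector_space kN by (rule kscale_vector_space[OF vsB _ N_mod]) (metis smB_mult_left smB_mult_right)

lemma f_one: "f 1 = 1" and f_mult: "f (x * y) = f x * f y" and f_add: "f (x + y) = f x + f y"
  and f_scale: "f (smA c x) = smB c (f x)"
  using f_alg_hom unfolding alg_hom_def by auto

lemma f_zero: "f 0 = 0"
  using f_add[of 0 0] by simp

lemma smB_eq_mult: "smB c x = smB c 1 * x"
  using smB_mult_left[of c 1 x] by simp

lemma kR_eq_act: "kR c m = actR (f (smA c 1)) m"
  by (simp add: kscale_def f_scale f_one)

lemma actR_kR: "actR b (kR c m) = kR c (actR b m)"
  unfolding kscale_def
  by (metis act_mult[OF R_mod] mult_1 smB_mult_left smB_mult_right mult_1_right)

lemmas actR = act_mult[OF R_mod] act_one[OF R_mod] act_add_left[OF R_mod] act_add_right[OF R_mod]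
  act_zero_left[OF R_mod] act_zero_right[OF R_mod]

lemma phi_add: "\<phi> (m + m') = \<phi> m + \<phi> m'" and phi_act: "\<phi> (actR a m) = actN a (\<phi> m)"
  using phi_hom unfolding A_hom_def by auto

lemma phi_zero: "\<phi> 0 = 0" using phi_add[of 0 0] by simp
lemma phi_diff: "\<phi> (m - m') = \<phi> m - \<phi> m'" using phi_add[of "m - m'" m'] by (simp add: eq_diff_eq)
lemma phi_sum: "\<phi> (sum g S) = (\<Sum>x\<in>S. \<phi> (g x))"
  by (induct S rule: infinite_finite_induct) (simp_all add: phi_add phi_zero)
lemma phi_kR: "\<phi> (kR c m) = kN c (\<phi> m)" unfolding kscale_def by (simp add: phi_act)

lemma FR_zero: "0 \<in> FR i" and FR_add: "x \<in> FR i \<Longrightarrow> y \<in> FR i \<Longrightarrow> x + y \<in> FR i"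
  and FR_act: "x \<in> FR i \<Longrightarrow> actR a x \<in> FR i"
  using filt_sub unfolding submod_def by auto

lemma FR_uminus: "x \<in> FR i \<Longrightarrow> - x \<in> FR i" using submod_uminus[OF R_mod] filt_sub by blast
lemma FR_diff: "x \<in> FR i \<Longrightarrow> y \<in> FR i \<Longrightarrow> x - y \<in> FR i" using submod_diff[OF R_mod] filt_sub by blast
lemma FR_sum: "(\<And>j. j \<in> J \<Longrightarrow> g j \<in> FR i) \<Longrightarrow> sum g J \<in> FR i"
  using submod_sum filt_sub by blast
lemma FR_subspace: "R.subspace (FR i)"
  using submod_subspace[OF R.module_axioms] filt_sub by blast

lemma FR_antimono: "i \<le> j \<Longrightarrow> FR j \<subseteq> FR i"
proof (induct j rule: int_ge_induct)
  case (step j)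
  then show ?case using filt_dec by blast
qed simp

lemma GN_subspace: "N.subspace (GN i)"
  using N_direct_decomp unfolding direct_decomp_def by auto

lemma graded_correction:
  assumes "x \<in> FR i" shows "\<exists>t\<in>FR (i + 1). \<phi> x - \<phi> t \<in> GN i"
proof -
  have "\<phi> x \<in> N.span (\<Union>j\<in>{i..}. GN j)"
    using phi_filt assms unfolding grade_ge_def by blast
  then obtain g z where gz: "g \<in> GN i" "z \<in> grade_ge smB actN GN (i + 1)" "\<phi> x = g + z"
    using N.span_ge_split[of GN, OF GN_subspace] unfolding grade_ge_def by blast
  obtain t where "t \<in> FR (i + 1)" "z = \<phi> t" using gz(2) phi_filt by (metis imageE)
  then show ?thesis using gz by force
qed

definition splitting_data :: "int \<Rightarrow> nat \<Rightarrow> ('r \<Rightarrow> nat \<Rightarrow> 'a) \<Rightarrow> ((nat \<Rightarrow> 'a) \<Rightarrow> 'r) \<Rightarrow> bool"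
  where "splitting_data i n s p \<longleftrightarrow>
        (\<forall>m\<in>FR i. s m \<in> free_mod n)
      \<and> (\<forall>m\<in>FR i. \<forall>m'\<in>FR i. s (m + m') = (\<lambda>k. s m k + s m' k))
      \<and> (\<forall>x m. m \<in> FR i \<longrightarrow> s (actR (f x) m) = (\<lambda>k. x * s m k))
      \<and> (\<forall>m\<in>FR (i + 1). s m = (\<lambda>k. 0))
      \<and> (\<forall>v\<in>free_mod n. p v \<in> FR i)
      \<and> (\<forall>v\<in>free_mod n. \<forall>w\<in>free_mod n. p (\<lambda>k. v k + w k) = p v + p w)
      \<and> (\<forall>x. \<forall>v\<in>free_mod n. p (\<lambda>k. x * v k) = actR (f x) (p v))
      \<and> (\<forall>m\<in>FR i. p (s m) - m \<in> FR (i + 1))"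

definition graded_splitting :: "int \<Rightarrow> nat \<Rightarrow> ('r \<Rightarrow> nat \<Rightarrow> 'a) \<Rightarrow> ((nat \<Rightarrow> 'a) \<Rightarrow> 'r) \<Rightarrow> bool"
  where "graded_splitting i n s p \<longleftrightarrow> splitting_data i n s p \<and> (\<forall>k<n. \<phi> (p (unit_vec k)) \<in> GN i)"

lemma splitting_data_correct:
  assumes split: "splitting_data i n s p" and T: "\<And>k. k < n \<Longrightarrow> T k \<in> FR (i + 1)"
  shows "splitting_data i n s (\<lambda>v. p v - (\<Sum>k<n. actR (f (v k)) (T k)))"
proof -
  have T_sum: "(\<Sum>k<n. actR (f (v k)) (T k)) \<in> FR (i + 1)" for v
    using T by (auto intro!: FR_sum FR_act)
  let ?p' = "\<lambda>v. p v - (\<Sum>k<n. actR (f (v k)) (T k))"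
  have "?p' v \<in> FR i" if "v \<in> free_mod n" for v
  proof (rule FR_diff)
    show "p v \<in> FR i" using split that unfolding splitting_data_def by blast
    show "(\<Sum>k<n. actR (f (v k)) (T k)) \<in> FR i" using T_sum filt_dec by blast
  qed
  moreover have "?p' (\<lambda>k. v k + w k) = ?p' v + ?p' w" if "v \<in> free_mod n" "w \<in> free_mod n" for v w
    using split that unfolding splitting_data_def by (simp add: f_add actR sum.distrib)
  moreover have "?p' (\<lambda>k. x * v k) = actR (f x) (?p' v)" if "v \<in> free_mod n" for x v
    using split that unfolding splitting_data_def
    by (simp add: f_mult actR act_sum_right[OF R_mod] act_diff_right[OF R_mod])
  moreover have "?p' (s m) - m \<in> FR (i + 1)" if "m \<in> FR i" for m
  proof -
    have "p (s m) - m \<in> FR (i + 1)" using split that unfolding splitting_data_def by blast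
    then have "(p (s m) - m) - (\<Sum>k<n. actR (f (s m k)) (T k)) \<in> FR (i + 1)"
      using T_sum by (rule FR_diff)
    then show ?thesis by (simp add: algebra_simps)
  qed
  ultimately show ?thesis using split unfolding splitting_data_def by blast
qed

lemma graded_splitting_exists: "\<exists>n s p. graded_splitting i n s p"
proof -
  obtain n s p where split: "splitting_data i n s p"
    using filt_proj unfolding projective_quotient_def splitting_data_def by blast
  then have "\<forall>k<n. \<exists>t\<in>FR (i + 1). \<phi> (p (unit_vec k)) - \<phi> t \<in> GN i"
    using graded_correction unit_vec_free_mod unfolding splitting_data_def by blast
  then obtain T where T: "\<And>k. k < n \<Longrightarrow> T k \<in> FR (i + 1) \<and> \<phi> (p (unit_vec k)) - \<phi> (T k) \<in> GN i"
    by metis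
  define p' where "p' v = p v - (\<Sum>k<n. actR (f (v k)) (T k))" for v
  have "\<phi> (p' (unit_vec k)) \<in> GN i" if k: "k < n" for k
  proof -
    have "(\<Sum>k'<n. actR (f (unit_vec k k')) (T k')) = (\<Sum>k'<n. if k' = k then T k else 0)"
      by (rule sum.cong) (auto simp: unit_vec_def actR f_one f_zero)
    also have "\<dots> = T k" using k by simp
    finally show ?thesis using T[OF k] unfolding p'_def by (simp add: phi_diff)
  qed
  moreover have "splitting_data i n s p'"
    unfolding p'_def using splitting_data_correct[OF split] T by blast
  ultimately show ?thesis unfolding graded_splitting_def by blast
qed

end

section \<open>The complement at one filtration level\<close>

locale splitting_level = filtered_cover smA ga smB f actR FR actN GN \<phi>
  for smA :: "'k::field \<Rightarrow> 'a::ring_1 \<Rightarrow> 'a" and ga smB f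
    and actR :: "'b::ring_1 \<Rightarrow> 'r::ab_group_add \<Rightarrow> 'r" and FR
    and actN :: "'b \<Rightarrow> 'n::ab_group_add \<Rightarrow> 'n" and GN \<phi> +
  fixes i :: int and n :: nat and s :: "'r \<Rightarrow> nat \<Rightarrow> 'a" and p :: "(nat \<Rightarrow> 'a) \<Rightarrow> 'r"
  assumes splitting: "graded_splitting i n s p"
begin

lemma s_free: "m \<in> FR i \<Longrightarrow> s m \<in> free_mod n"
  and s_add: "m \<in> FR i \<Longrightarrow> m' \<in> FR i \<Longrightarrow> s (m + m') = (\<lambda>k. s m k + s m' k)"
  and s_act: "m \<in> FR i \<Longrightarrow> s (actR (f x) m) = (\<lambda>k. x * s m k)"
  and s_vanish: "m \<in> FR (i + 1) \<Longrightarrow> s m = (\<lambda>k. 0)"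
  and p_in: "v \<in> free_mod n \<Longrightarrow> p v \<in> FR i"
  and p_add: "v \<in> free_mod n \<Longrightarrow> w \<in> free_mod n \<Longrightarrow> p (\<lambda>k. v k + w k) = p v + p w"
  and p_act: "v \<in> free_mod n \<Longrightarrow> p (\<lambda>k. x * v k) = actR (f x) (p v)"
  and p_s: "m \<in> FR i \<Longrightarrow> p (s m) - m \<in> FR (i + 1)"
  and phi_p_unit_vec: "k < n \<Longrightarrow> \<phi> (p (unit_vec k)) \<in> GN i"
  using splitting unfolding graded_splitting_def splitting_data_def by auto

lemma s_zero: "s 0 = (\<lambda>k. 0)"
  using s_add[OF FR_zero FR_zero] by (simp add: fun_eq_iff)

lemma s_diff: "m \<in> FR i \<Longrightarrow> m' \<in> FR i \<Longrightarrow> s (m - m') k = s m k - s m' k"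
  using s_add[of "m - m'" m'] FR_diff by (simp add: fun_eq_iff eq_diff_eq)

lemma s_sum: "(\<And>j. j \<in> J \<Longrightarrow> g j \<in> FR i) \<Longrightarrow> s (sum g J) k = (\<Sum>j\<in>J. s (g j) k)"
  by (induct J rule: infinite_finite_induct) (simp_all add: s_zero s_add FR_sum)

lemma p_zero: "p (\<lambda>k. 0) = 0"
  using p_add[OF free_mod_zero free_mod_zero] by simp

lemma p_sum: "(\<And>k. k \<in> K \<Longrightarrow> w k \<in> free_mod n) \<Longrightarrow> p (\<lambda>l. \<Sum>k\<in>K. w k l) = (\<Sum>k\<in>K. p (w k))"
proof (induct K rule: infinite_finite_induct)
  case (insert k K)
  have "w k \<in> free_mod n" "(\<lambda>l. \<Sum>k\<in>K. w k l) \<in> free_mod n"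
    using insert.prems by (auto intro: free_mod_sum)
  then show ?case using insert p_add by simp
qed (simp_all add: p_zero)

lemma p_expansion:
  assumes "v \<in> free_mod n" shows "p v = (\<Sum>k<n. actR (f (v k)) (p (unit_vec k)))"
proof -
  have "p v = p (\<lambda>l. \<Sum>k<n. v k * unit_vec k l)"
    using free_mod_unit_vec_expansion[OF assms] by simp
  also have "\<dots> = (\<Sum>k<n. p (\<lambda>l. v k * unit_vec k l))"
    by (rule p_sum) (simp add: free_mod_mult unit_vec_free_mod)
  finally show ?thesis by (simp add: p_act unit_vec_free_mod)
qed

text \<open>\<open>coord0 m\<close> is the image of \<open>m\<close> in \<open>(a/a\<^sub>\<ge>\<^sub>1)\<^sup>n\<close>, realised by the degree-0 components.\<close>

definition coord0 :: "'r \<Rightarrow> nat \<Rightarrow> 'a" where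
  "coord0 m = (\<lambda>k. hcomp ga (s m k) 0)"

lemma coord0_free: "m \<in> FR i \<Longrightarrow> coord0 m \<in> free_mod n"
  unfolding coord0_def using s_free by (auto intro: free_mod_map)

lemma coord0_add: "m \<in> FR i \<Longrightarrow> m' \<in> FR i \<Longrightarrow> coord0 (m + m') = (\<lambda>k. coord0 m k + coord0 m' k)"
  unfolding coord0_def by (simp add: s_add hcomp_add)

lemma coord0_diff: "m \<in> FR i \<Longrightarrow> m' \<in> FR i \<Longrightarrow> coord0 (m - m') k = coord0 m k - coord0 m' k"
  unfolding coord0_def by (simp add: s_diff hcomp_diff)

lemma coord0_act_ga0: "m \<in> FR i \<Longrightarrow> x \<in> ga 0 \<Longrightarrow> coord0 (actR (f x) m) = (\<lambda>k. x * coord0 m k)"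
  unfolding coord0_def by (simp add: s_act hcomp_mult_ga0)

abbreviation "rad \<equiv> rad_flat smA ga smB f actR (FR i)"
abbreviation "U \<equiv> set_plus (FR (i + 1)) rad"

lemma rad_subset_FR: "rad \<subseteq> FR i"
  unfolding rad_flat_def by (rule R.span_minimal[OF _ FR_subspace]) (auto intro: FR_act)

lemma coord0_rad: "r \<in> rad \<Longrightarrow> coord0 r = (\<lambda>k. 0)"
proof -
  assume "r \<in> rad"
  then have "r \<in> FR i \<and> coord0 r = (\<lambda>k. 0)" unfolding rad_flat_def
  proof (induct rule: R.span_induct_alt)
    case base then show ?case unfolding coord0_def by (simp add: s_zero FR_zero)
  next
    case (step c g y)
    then obtain x m where g: "g = actR (f x) m" "x \<in> a_ge smA ga 1" "m \<in> FR i" by auto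
    have gF: "kR c g \<in> FR i" using g R.subspace_scale[OF FR_subspace] FR_act by blast
    have "kR c g = actR (f (smA c 1 * x)) m" using g by (simp add: kR_eq_act f_mult actR)
    moreover have "smA c 1 * x \<in> a_ge smA ga 1"
      using a_ge_mult[OF ga_in_a_ge[OF ga_scale[OF one_ga0]] g(2), of 0] by simp
    ultimately have "coord0 (kR c g) = (\<lambda>k. 0)" unfolding coord0_def
      using g hcomp_a_ge_mult[of _ 1] by (simp add: s_act)
    then show ?case using coord0_add[OF gF] step gF by (simp add: FR_add)
  qed
  then show ?thesis ..
qed

lemma U_subset_FR: "U \<subseteq> FR i"
  unfolding set_plus_def using rad_subset_FR filt_dec by (auto intro: FR_add)

lemma coord0_U: "u \<in> U \<Longrightarrow> coord0 u = (\<lambda>k. 0)"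
proof -
  assume "u \<in> U"
  then obtain a r where ar: "u = a + r" "a \<in> FR (i + 1)" "r \<in> rad" unfolding set_plus_def by auto
  have "coord0 a = (\<lambda>k. 0)" unfolding coord0_def using s_vanish[OF ar(2)] by simp
  then show ?thesis using ar coord0_rad[OF ar(3)] coord0_add[of a r] rad_subset_FR filt_dec by auto
qed

lemma p_a_ge1_in_rad: "v \<in> free_mod n \<Longrightarrow> (\<And>k. v k \<in> a_ge smA ga 1) \<Longrightarrow> p v \<in> rad"
  unfolding p_expansion rad_flat_def
  by (intro R.span_sum R.span_base) (use p_in unit_vec_free_mod in blast)

text \<open>Lifting the degree-0 coordinates of \<open>m\<close> recovers \<open>m\<close> up to \<open>FR (i + 1)\<close> and the part of
  the coordinates lying in \<open>a\<^sub>\<ge>\<^sub>1\<close>, whose lift lies in \<open>rad\<close>.\<close>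

lemma p_coord0_minus_in_U: "m \<in> FR i \<Longrightarrow> p (coord0 m) - m \<in> U"
proof -
  assume m: "m \<in> FR i"
  define w where "w = (\<lambda>k. s m k - hcomp ga (s m k) 0)"
  have w: "w \<in> free_mod n" using s_free[OF m] unfolding w_def free_mod_def by auto
  have "s m = (\<lambda>k. coord0 m k + w k)" unfolding w_def coord0_def by auto
  then have "p (s m) = p (coord0 m) + p w" using p_add[OF coord0_free[OF m] w] by simp
  then have "p (coord0 m) - m = (p (s m) - m) + (- p w)" by (simp add: algebra_simps)
  moreover have "- p w \<in> rad"
    using p_a_ge1_in_rad[OF w] minus_hcomp0_in_a_ge1 R.span_neg unfolding w_def rad_flat_def
    by blast
  ultimately show ?thesis unfolding set_plus_def using p_s[OF m] by blast
qed

lemma coord0_p_coord0: "m \<in> FR i \<Longrightarrow> coord0 (p (coord0 m)) = coord0 m"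
  using coord0_U[OF p_coord0_minus_in_U] coord0_diff[OF p_in[OF coord0_free]]
  by (simp add: fun_eq_iff)

definition h :: "'r set" where "h = p ` coord0 ` FR i"

lemma h_subset_FR: "h \<subseteq> FR i" unfolding h_def using p_in coord0_free by auto

lemma p_coord0_h: "m \<in> h \<Longrightarrow> p (coord0 m) = m"
  unfolding h_def using coord0_p_coord0 by auto

lemma zero_in_h: "0 \<in> h"
proof -
  have "coord0 0 = (\<lambda>k. 0)" unfolding coord0_def by (simp add: s_zero)
  then show ?thesis unfolding h_def using p_zero FR_zero by (metis image_eqI)
qed

lemma h_submod: "submod actR (f ` ga 0) h"
  unfolding submod_def
proof (intro conjI ballI)
  show "0 \<in> h" by (rule zero_in_h)
  fix x y assume "x \<in> h" "y \<in> h"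
  then obtain a b where ab: "a \<in> FR i" "b \<in> FR i" "x = p (coord0 a)" "y = p (coord0 b)"
    unfolding h_def by auto
  then have "x + y = p (coord0 (a + b))" using p_add[OF coord0_free coord0_free] coord0_add by simp
  then show "x + y \<in> h" unfolding h_def using ab FR_add by blast
next
  fix c x assume "c \<in> f ` ga 0" "x \<in> h"
  then obtain y a where ya: "y \<in> ga 0" "c = f y" "a \<in> FR i" "x = p (coord0 a)"
    unfolding h_def by auto
  then have "actR c x = p (coord0 (actR (f y) a))" using p_act[OF coord0_free] coord0_act_ga0 by simp
  then show "actR c x \<in> h" unfolding h_def using ya FR_act by blast
qed

lemma h_inter_U: "h \<inter> U = {0}"
proof
  show "h \<inter> U \<subseteq> {0}"
  proof
    fix x assume "x \<in> h \<inter> U"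
    then obtain a where a: "a \<in> FR i" "x = p (coord0 a)" "x \<in> U" unfolding h_def by auto
    then have "coord0 a = (\<lambda>k. 0)" using coord0_U coord0_p_coord0 by metis
    then show "x \<in> {0}" using a p_zero by simp
  qed
  have "0 \<in> U" unfolding set_plus_def rad_flat_def using R.span_zero FR_zero by force
  then show "{0} \<subseteq> h \<inter> U" using zero_in_h by auto
qed

lemma h_plus_U: "set_plus h U = FR i"
proof
  show "set_plus h U \<subseteq> FR i"
  proof
    fix z assume "z \<in> set_plus h U"
    then obtain a b where "z = a + b" "a \<in> h" "b \<in> U" by (auto simp: set_plus_def)
    then show "z \<in> FR i" using h_subset_FR U_subset_FR FR_add by blast
  qed
  show "FR i \<subseteq> set_plus h U"
  proof
    fix m assume m: "m \<in> FR i"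
    obtain a r where ar: "p (coord0 m) - m = a + r" "a \<in> FR (i + 1)" "r \<in> rad"
      using p_coord0_minus_in_U[OF m] unfolding set_plus_def by auto
    have "- r \<in> rad" using ar(3) R.span_neg unfolding rad_flat_def by blast
    then have "(- a) + (- r) \<in> U" unfolding set_plus_def using FR_uminus[OF ar(2)] by blast
    moreover have "m = p (coord0 m) + ((- a) + (- r))" using ar(1) by (simp add: algebra_simps)
    moreover have "p (coord0 m) \<in> h" unfolding h_def using m by blast
    ultimately show "m \<in> set_plus h U" unfolding set_plus_def by blast
  qed
qed

lemma phi_h: "\<phi> ` h \<subseteq> GN i"
proof
  fix y assume "y \<in> \<phi> ` h"
  then obtain a where a: "a \<in> FR i" "y = \<phi> (p (coord0 a))" unfolding h_def by auto
  have "y = (\<Sum>k<n. actN (f (coord0 a k)) (\<phi> (p (unit_vec k))))"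
    using a p_expansion[OF coord0_free[OF a(1)]] by (simp add: phi_sum phi_act)
  also have "\<dots> \<in> GN i"
  proof (rule N.subspace_sum[OF GN_subspace])
    fix k assume "k \<in> {..<n}"
    then show "actN (f (coord0 a k)) (\<phi> (p (unit_vec k))) \<in> GN i"
      using N_graded[OF hcomp_in[of "s a k" 0] phi_p_unit_vec] unfolding coord0_def by simp
  qed
  finally show "y \<in> GN i" .
qed

definition layer :: "nat \<Rightarrow> 'r set" where
  "layer j = R.span {actR (f x) m | x m. x \<in> ga j \<and> m \<in> h}"

lemma layer_coords:
  assumes "y \<in> layer j"
  shows "y \<in> FR i \<and> (\<forall>k d. d < j \<longrightarrow> hcomp ga (s y k) d = 0) \<and> p (\<lambda>k. hcomp ga (s y k) j) = y"
  using assms unfolding layer_def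
proof (induct rule: R.span_induct_alt)
  case base then show ?case by (simp add: s_zero p_zero FR_zero)
next
  case (step c g y)
  then obtain x m where g: "g = actR (f x) m" "x \<in> ga j" "m \<in> h" by auto
  have m: "m \<in> FR i" using g h_subset_FR by auto
  define x' where "x' = smA c 1 * x"
  have x': "x' \<in> ga j" unfolding x'_def using g(2) ga_scale smA_eq_mult by metis
  have kg: "kR c g = actR (f x') m" using g by (simp add: x'_def kR_eq_act f_mult actR)
  have gF: "kR c g \<in> FR i" using kg m FR_act by simp
  have yF: "y \<in> FR i" using step by auto
  have s_step: "s (kR c g + y) = (\<lambda>k. x' * s m k + s y k)"
    using s_add[OF gF yF] kg s_act[OF m] by simp
  have "\<forall>k d. d < j \<longrightarrow> hcomp ga (s (kR c g + y) k) d = 0"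
    using s_step step by (simp add: hcomp_add hcomp_mult_homogeneous[OF x'])
  moreover have "(\<lambda>k. hcomp ga (s (kR c g + y) k) j) = (\<lambda>k. x' * coord0 m k + hcomp ga (s y k) j)"
    using s_step by (simp add: hcomp_add hcomp_mult_homogeneous[OF x'] coord0_def)
  moreover have "p (\<lambda>k. x' * coord0 m k + hcomp ga (s y k) j) = actR (f x') m + y"
  proof -
    have "(\<lambda>k. hcomp ga (s y k) j) \<in> free_mod n"
      using free_mod_map[OF s_free[OF yF], of "\<lambda>a. hcomp ga a j"] by simp
    then show ?thesis
      using p_add[OF free_mod_mult[OF coord0_free[OF m]]] p_act[OF coord0_free[OF m]]
        p_coord0_h[OF g(3)] step by simp
  qed
  ultimately show ?case using gF yF kg by (simp add: FR_add)
qed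

lemma layer_subset_FR: "layer j \<subseteq> FR i"
  using layer_coords by blast

lemma lowest_layer_vanishes:
  assumes Q: "finite Q" and q0: "q0 \<in> Q"
    and y: "\<And>q. q \<in> Q \<Longrightarrow> y q \<in> layer (deg q)"
    and deg: "\<And>q. q \<in> Q - {q0} \<Longrightarrow> deg q0 < deg q"
    and sum: "sum y Q \<in> FR (i + 1)"
  shows "y q0 = 0"
proof -
  have yF: "y q \<in> FR i" if "q \<in> Q" for q using y[OF that] layer_subset_FR by blast
  have "hcomp ga (s (y q0) k) (deg q0) = 0" for k
  proof -
    have "0 = hcomp ga (s (sum y Q) k) (deg q0)" using s_vanish[OF sum] by simp
    also have "\<dots> = (\<Sum>q\<in>Q. hcomp ga (s (y q) k) (deg q0))" using yF by (simp add: s_sum hcomp_sum)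
    also have "\<dots> = hcomp ga (s (y q0) k) (deg q0) + (\<Sum>q\<in>Q - {q0}. hcomp ga (s (y q) k) (deg q0))"
      by (rule sum.remove[OF Q q0])
    also have "(\<Sum>q\<in>Q - {q0}. hcomp ga (s (y q) k) (deg q0)) = 0"
      using layer_coords y deg by (intro sum.neutral) blast
    finally show ?thesis by simp
  qed
  then show ?thesis using layer_coords[OF y[OF q0]] p_zero by simp
qed

end

section \<open>The grading induced by the complements\<close>

lemma finite_lex_min_pair:
  fixes Q :: "('a::linorder \<times> 'b::linorder) set"
  assumes "finite Q" "Q \<noteq> {}"
  obtains n0 i0 where "(n0, i0) \<in> Q" "\<And>q. q \<in> Q \<Longrightarrow> i0 \<le> snd q" "\<And>n. (n, i0) \<in> Q \<Longrightarrow> n0 \<le> n"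
proof -
  define i0 where "i0 = Min (snd ` Q)"
  have "i0 \<in> snd ` Q" unfolding i0_def using assms by (intro Min_in) auto
  then obtain n' where n': "(n', i0) \<in> Q" by force
  define N0 where "N0 = {n. (n, i0) \<in> Q}"
  have "N0 \<subseteq> fst ` Q" unfolding N0_def by force
  then have N0: "finite N0" "n' \<in> N0" using assms(1) finite_subset n' unfolding N0_def by auto
  show ?thesis
  proof
    show "(Min N0, i0) \<in> Q" using Min_in[OF N0(1)] N0(2) unfolding N0_def by auto
    show "i0 \<le> snd q" if "q \<in> Q" for q unfolding i0_def using assms that by auto
    show "Min N0 \<le> n" if "(n, i0) \<in> Q" for n using N0 that unfolding N0_def by simp
  qed
qed

locale graded_lift = filtered_cover smA ga smB f actR FR actN GN \<phi>
  for smA :: "'k::field \<Rightarrow> 'a::ring_1 \<Rightarrow> 'a" and ga smB f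
    and actR :: "'b::ring_1 \<Rightarrow> 'r::ab_group_add \<Rightarrow> 'r" and FR
    and actN :: "'b \<Rightarrow> 'n::ab_group_add \<Rightarrow> 'n" and GN \<phi> +
  fixes rank :: "int \<Rightarrow> nat" and coord :: "int \<Rightarrow> 'r \<Rightarrow> nat \<Rightarrow> 'a"
    and lift :: "int \<Rightarrow> (nat \<Rightarrow> 'a) \<Rightarrow> 'r"
  assumes splittings: "\<And>i. graded_splitting i (rank i) (coord i) (lift i)"
begin

lemma level: "splitting_level smA ga smB f actR FR actN GN \<phi> i (rank i) (coord i) (lift i)"
  by (intro splitting_level.intro filtered_cover_axioms splitting_level_axioms.intro splittings)

definition h :: "int \<Rightarrow> 'r set" where
  "h i = splitting_level.h ga FR i (coord i) (lift i)"

definition layer :: "int \<Rightarrow> nat \<Rightarrow> 'r set" where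
  "layer i j = R.span {actR (f x) m | x m. x \<in> ga j \<and> m \<in> h i}"

lemma level_layer: "splitting_level.layer ga smB f actR FR i (coord i) (lift i) j = layer i j"
  unfolding splitting_level.layer_def[OF level] layer_def h_def ..

lemma layer_subset_FR: "layer i j \<subseteq> FR i"
  using splitting_level.layer_subset_FR[OF level] level_layer by blast

text \<open>Independence of the layers \<open>a\<^sub>n\<^sub>-\<^sub>i h\<^sub>i\<close>, indexed by pairs \<open>(n, i)\<close>: look at the lowest
  filtration level \<open>i\<close> that occurs, and there at the lowest degree \<open>n\<close>.\<close>

lemma layers_independent:
  assumes Q: "finite Q"
    and y: "\<And>n i. (n, i) \<in> Q \<Longrightarrow> i \<le> n \<and> y (n, i) \<in> layer i (nat (n - i))"
    and sum: "sum y Q = 0"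
  shows "\<forall>q\<in>Q. y q = 0"
proof (rule ccontr)
  assume "\<not> (\<forall>q\<in>Q. y q = 0)"
  define Q' where "Q' = {q \<in> Q. y q \<noteq> 0}"
  have Q': "finite Q'" "Q' \<noteq> {}" "Q' \<subseteq> Q" using Q \<open>\<not> _\<close> unfolding Q'_def by auto
  have y_FR: "y q \<in> FR (snd q)" if "q \<in> Q" for q
    using y[of "fst q" "snd q"] that layer_subset_FR by auto
  have "sum y Q = sum y Q'" by (rule sum.mono_neutral_right[OF Q Q'(3)]) (auto simp: Q'_def)
  then have sum': "sum y Q' = 0" using sum by simp
  obtain n0 i0 where q0: "(n0, i0) \<in> Q'" and i0_le: "\<And>q. q \<in> Q' \<Longrightarrow> i0 \<le> snd q"
    and n0_le: "\<And>n. (n, i0) \<in> Q' \<Longrightarrow> n0 \<le> n"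
    using finite_lex_min_pair[OF Q'(1,2)] by blast
  define Q0 where "Q0 = {q \<in> Q'. snd q = i0}"
  have Q0: "finite Q0" "Q0 \<subseteq> Q'" "(n0, i0) \<in> Q0" using Q' q0 unfolding Q0_def by auto
  have "sum y (Q' - Q0) \<in> FR (i0 + 1)"
  proof (rule FR_sum)
    fix q assume q: "q \<in> Q' - Q0"
    then have "i0 + 1 \<le> snd q" using i0_le[of q] unfolding Q0_def by auto
    then show "y q \<in> FR (i0 + 1)" using y_FR q Q'(3) FR_antimono by blast
  qed
  moreover have "sum y Q0 + sum y (Q' - Q0) = 0"
    using sum.subset_diff[OF Q0(2) Q'(1), of y] sum' by (simp add: add.commute)
  then have "sum y Q0 = - sum y (Q' - Q0)" by (simp only: eq_neg_iff_add_eq_0)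
  ultimately have sum0: "sum y Q0 \<in> FR (i0 + 1)" using FR_uminus by simp
  have y0: "y q \<in> splitting_level.layer ga smB f actR FR i0 (coord i0) (lift i0) (nat (fst q - i0))"
    if "q \<in> Q0" for q
    using that y[of "fst q" i0] level_layer Q'(3) unfolding Q0_def by auto
  have deg0: "nat (n0 - i0) < nat (fst q - i0)" if "q \<in> Q0 - {(n0, i0)}" for q
  proof -
    have "(fst q, i0) \<in> Q'" "fst q \<noteq> n0" using that unfolding Q0_def by (auto simp: prod_eq_iff)
    moreover have "i0 \<le> n0" using y q0 Q'(3) by blast
    ultimately show ?thesis using n0_le by force
  qed
  have "y (n0, i0) = 0"
    using splitting_level.lowest_layer_vanishes[OF level[of i0] Q0(1,3) y0 _ sum0] deg0 by simp
  then show False using q0 unfolding Q'_def by simp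
qed

abbreviation "Rg \<equiv> grading_from ga smB f actR h"

lemma grading_from_decomp:
  assumes "r \<in> Rg n"
  shows "\<exists>F g. finite F \<and> F \<subseteq> {..n} \<and> (\<forall>i\<in>F. g i \<in> layer i (nat (n - i))) \<and> r = sum g F"
proof -
  have "Rg n = R.span (\<Union>i\<in>{..n}. {actR (f x) m | x m. x \<in> ga (nat (n - i)) \<and> m \<in> h i})"
    unfolding grading_from_def by (rule arg_cong[where f = R.span]) auto
  with assms have "r \<in> R.span (\<Union>i\<in>{..n}. {actR (f x) m | x m. x \<in> ga (nat (n - i)) \<and> m \<in> h i})"
    by simp
  from R.span_UN_decomp[OF this] show ?thesis unfolding layer_def .
qed

lemma grading_independent:
  assumes D: "finite D" and r: "\<And>n. n \<in> D \<Longrightarrow> r n \<in> Rg n" and sum: "sum r D = 0"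
  shows "\<forall>n\<in>D. r n = 0"
proof -
  have "\<forall>n\<in>D. \<exists>F g. finite F \<and> F \<subseteq> {..n} \<and> (\<forall>i\<in>F. g i \<in> layer i (nat (n - i))) \<and> r n = sum g F"
    using grading_from_decomp r by blast
  then obtain F g where F: "\<And>n. n \<in> D \<Longrightarrow> finite (F n) \<and> F n \<subseteq> {..n}"
    and g: "\<And>n i. n \<in> D \<Longrightarrow> i \<in> F n \<Longrightarrow> g n i \<in> layer i (nat (n - i))"
    and r_sum: "\<And>n. n \<in> D \<Longrightarrow> r n = sum (g n) (F n)"
    by metis
  have "sum (\<lambda>(n, i). g n i) (Sigma D F) = (\<Sum>n\<in>D. sum (g n) (F n))"
    using F by (subst sum.Sigma[OF D]) auto
  also have "\<dots> = 0" using r_sum sum by simp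
  finally have "\<forall>q\<in>Sigma D F. (\<lambda>(n, i). g n i) q = 0"
    using F g by (intro layers_independent) (auto intro: finite_SigmaI D)
  then show ?thesis using r_sum by (auto intro!: sum.neutral)
qed

lemma Rg_subspace: "R.subspace (Rg n)" unfolding grading_from_def by simp

lemma h_subset_Rg: "h i \<subseteq> Rg i"
  unfolding grading_from_def
  by (auto intro!: R.span_base exI[of _ 1] exI[of _ i] simp: one_ga0 f_one actR)

lemma ga_act_Rg: "x \<in> ga j \<Longrightarrow> m \<in> Rg n \<Longrightarrow> actR (f x) m \<in> Rg (int j + n)"
proof -
  assume x: "x \<in> ga j"
  assume "m \<in> Rg n"
  then show ?thesis unfolding grading_from_def
  proof (induct rule: R.span_induct_alt)
    case base then show ?case by (simp add: actR R.span_zero)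
  next
    case (step c g y)
    then obtain x' m' i' where g: "g = actR (f x') m'" "i' \<le> n" "x' \<in> ga (nat (n - i'))" "m' \<in> h i'"
      by auto
    have "actR (f x) g = actR (f (x * x')) m'" using g by (simp add: f_mult actR)
    moreover have "j + nat (n - i') = nat (int j + n - i')" using g(2) by linarith
    then have "x * x' \<in> ga (nat (int j + n - i'))" using ga_mult[OF x g(3)] by simp
    ultimately have "actR (f x) g \<in>
        R.span {actR (f x) m | x m i. i \<le> int j + n \<and> x \<in> ga (nat (int j + n - i)) \<and> m \<in> h i}"
      using g(2,4) by (intro R.span_base CollectI exI[of _ "x * x'"] exI[of _ m'] exI[of _ i']) auto
    then show ?case using step by (simp add: actR actR_kR R.span_add R.span_scale)
  qed
qed

definition Rge :: "int \<Rightarrow> 'r set" where "Rge i = grade_ge smB actR Rg i"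

lemma Rge_span: "Rge i = R.span (\<Union>n\<in>{i..}. Rg n)" unfolding Rge_def grade_ge_def ..

lemma Rge_subspace: "R.subspace (Rge i)" unfolding Rge_span by simp

lemma Rge_antimono: "i \<le> i' \<Longrightarrow> Rge i' \<subseteq> Rge i"
  unfolding Rge_span by (rule R.span_mono) (auto intro: order_trans)

lemma Rg_subset_Rge: "i \<le> n \<Longrightarrow> Rg n \<subseteq> Rge i"
  unfolding Rge_span by (auto intro: R.span_base)

lemma ga_act_Rge: "x \<in> ga d \<Longrightarrow> w \<in> Rge i \<Longrightarrow> actR (f x) w \<in> Rge (i + int d)"
proof -
  assume x: "x \<in> ga d"
  assume "w \<in> Rge i"
  then show ?thesis unfolding Rge_span
  proof (induct rule: R.span_induct_alt)
    case base then show ?case by (simp add: actR R.span_zero)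
  next
    case (step c g y)
    then obtain n where "i \<le> n" "g \<in> Rg n" by auto
    then have "actR (f x) g \<in> R.span (\<Union>n\<in>{i + int d..}. Rg n)"
      using ga_act_Rg[OF x] by (intro R.span_base) force
    then show ?case using step by (simp add: actR actR_kR R.span_add R.span_scale)
  qed
qed

lemma a_ge_act_Rge: "x \<in> a_ge smA ga t \<Longrightarrow> w \<in> Rge i \<Longrightarrow> actR (f x) w \<in> Rge (i + int t)"
proof -
  assume w: "w \<in> Rge i"
  assume "x \<in> a_ge smA ga t"
  then show ?thesis unfolding a_ge_def
  proof (induct rule: A.span_induct_alt)
    case base then show ?case by (simp add: f_zero actR R.subspace_0[OF Rge_subspace])
  next
    case (step c x z)
    then obtain d where d: "t \<le> d" "x \<in> ga d" by auto
    have "actR (f x) w \<in> Rge (i + int t)" using ga_act_Rge[OF d(2) w] Rge_antimono[of "i + int t" "i + int d"] d(1) by auto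
    moreover have "actR (f (smA c x + z)) w = kR c (actR (f x) w) + actR (f z) w"
      by (simp add: f_add f_scale actR kscale_def smB_eq_mult[of c "f x"])
    ultimately show ?case
      using step R.subspace_add[OF Rge_subspace] R.subspace_scale[OF Rge_subspace] by simp
  qed
qed

definition a_ge_FR :: "int \<Rightarrow> nat \<Rightarrow> 'r set" where
  "a_ge_FR i t = R.span {actR (f x) m | x m. x \<in> a_ge smA ga t \<and> m \<in> FR i}"

lemma a_ge_act_rad: "x \<in> a_ge smA ga t \<Longrightarrow> r \<in> rad_flat smA ga smB f actR (FR i) \<Longrightarrow> actR (f x) r \<in> a_ge_FR i (Suc t)"
proof -
  assume x: "x \<in> a_ge smA ga t"
  assume "r \<in> rad_flat smA ga smB f actR (FR i)"
  then show ?thesis unfolding rad_flat_def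
  proof (induct rule: R.span_induct_alt)
    case base then show ?case by (simp add: actR a_ge_FR_def R.span_zero)
  next
    case (step c g y)
    then obtain x' m where g: "g = actR (f x') m" "x' \<in> a_ge smA ga 1" "m \<in> FR i" by auto
    have "actR (f x) g = actR (f (x * x')) m" using g by (simp add: f_mult actR)
    moreover have "x * x' \<in> a_ge smA ga (Suc t)" using a_ge_mult[OF x g(2)] by simp
    ultimately have "actR (f x) g \<in> a_ge_FR i (Suc t)"
      unfolding a_ge_FR_def using g by (intro R.span_base) blast
    then show ?case using step by (simp add: actR actR_kR R.span_add R.span_scale a_ge_FR_def)
  qed
qed

text \<open>Since \<open>FR i = h\<^sub>i + FR (i + 1) + rad(FR i)\<close>, multiplying by \<open>a\<^sub>\<ge>\<^sub>t\<close> pushes the part not yet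
  in \<open>Rge i\<close> one step deeper into the radical filtration.\<close>

lemma a_ge_FR_step:
  assumes IH: "FR (i + 1) \<subseteq> Rge (i + 1)"
  shows "a_ge_FR i t \<subseteq> set_plus (Rge i) (a_ge_FR i (Suc t))"
  unfolding a_ge_FR_def[of i t]
proof (rule R.span_minimal)
  show "R.subspace (set_plus (Rge i) (a_ge_FR i (Suc t)))"
    by (rule R.subspace_set_plus[OF Rge_subspace]) (simp add: a_ge_FR_def)
  show "{actR (f x) m |x m. x \<in> a_ge smA ga t \<and> m \<in> FR i} \<subseteq> set_plus (Rge i) (a_ge_FR i (Suc t))"
  proof
    fix z assume "z \<in> {actR (f x) m |x m. x \<in> a_ge smA ga t \<and> m \<in> FR i}"
    then obtain x m where z: "z = actR (f x) m" "x \<in> a_ge smA ga t" "m \<in> FR i" by auto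
    have "set_plus (h i) (set_plus (FR (i + 1)) (rad_flat smA ga smB f actR (FR i))) = FR i"
      using splitting_level.h_plus_U[OF level] unfolding h_def .
    then obtain hm u r where d: "m = hm + (u + r)" "hm \<in> h i" "u \<in> FR (i + 1)"
        "r \<in> rad_flat smA ga smB f actR (FR i)"
      using z(3) unfolding set_plus_def by blast
    have "hm \<in> Rge i" using d(2) h_subset_Rg Rg_subset_Rge[of i i] by blast
    then have "actR (f x) hm \<in> Rge (i + int t)" by (rule a_ge_act_Rge[OF z(2)])
    then have "actR (f x) hm \<in> Rge i" using Rge_antimono[of i "i + int t"] by auto
    moreover have "actR (f x) u \<in> Rge i"
      using FR_act[OF d(3)] IH Rge_antimono[of i "i + 1"] by auto
    moreover have "actR (f x) r \<in> a_ge_FR i (Suc t)" by (rule a_ge_act_rad[OF z(2) d(4)])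
    moreover have "z = (actR (f x) hm + actR (f x) u) + actR (f x) r" using z d by (simp add: actR add.assoc)
    ultimately show "z \<in> set_plus (Rge i) (a_ge_FR i (Suc t))"
      unfolding set_plus_def using R.subspace_add[OF Rge_subspace] by blast
  qed
qed

lemma FR_subset_Rge_step:
  assumes IH: "FR (i + 1) \<subseteq> Rge (i + 1)"
  shows "FR i \<subseteq> Rge i"
proof -
  have "FR i \<subseteq> set_plus (Rge i) (a_ge_FR i t)" for t
  proof (induct t)
    case 0
    have "m \<in> a_ge_FR i 0" if "m \<in> FR i" for m
      using that a_ge0 unfolding a_ge_FR_def
      by (intro R.span_base CollectI exI[of _ 1] exI[of _ m]) (simp add: actR f_one)
    then show ?case using R.subspace_0[OF Rge_subspace] unfolding set_plus_def by force
  next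
    case (Suc t)
    then show ?case
      using a_ge_FR_step[OF IH] R.set_plus_add_left[OF Rge_subspace] unfolding set_plus_def by blast
  qed
  moreover obtain D where "a_ge smA ga D = {0}" using a_ge_eventually_zero by blast
  then have "a_ge_FR i D \<subseteq> {0}"
    unfolding a_ge_FR_def by (intro R.span_minimal) (auto simp: f_zero actR)
  ultimately show ?thesis unfolding set_plus_def by force
qed

lemma FR_subset_Rge: "FR i \<subseteq> Rge i"
proof -
  obtain i1 where i1: "\<forall>i\<ge>i1. FR i = {0}" using filt_high by blast
  have "i \<le> max i i1" by simp
  then show ?thesis
  proof (induct i rule: int_le_induct)
    case base
    then show ?case using i1 R.subspace_0[OF Rge_subspace] by auto
  next
    case (step i)
    then show ?case using FR_subset_Rge_step[of "i - 1"] by simp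
  qed
qed

lemma grading_direct_decomp: "direct_decomp kR Rg"
proof (rule R.direct_decompI[OF Rg_subspace])
  obtain i0 where "FR i0 = UNIV" using filt_low by blast
  then have "v \<in> R.span (\<Union>n\<in>{i0..}. Rg n)" for v using FR_subset_Rge[of i0] Rge_span by auto
  then show "v \<in> R.span (\<Union>n. Rg n)" for v using R.span_mono[of "\<Union>n\<in>{i0..}. Rg n"] by blast
qed (rule grading_independent)

lemma ideal_act_FR:
  assumes z: "z \<in> B.span {f y * b | y b. y \<in> a_ge smA ga t}" and m: "m \<in> FR i"
  shows "actR z m \<in> Rge (i + int t)"
  using z
proof (induct rule: B.span_induct_alt)
  case base then show ?case by (simp add: actR R.subspace_0[OF Rge_subspace])
next
  case (step c g z')
  then obtain y b where g: "g = f y * b" "y \<in> a_ge smA ga t" by auto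
  have "actR g m \<in> Rge (i + int t)"
    using a_ge_act_Rge[OF g(2) FR_subset_Rge[THEN subsetD, OF FR_act[OF m, of b]]] g by (simp add: actR)
  moreover have "actR (smB c g + z') m = kR c (actR g m) + actR z' m"
    by (simp add: actR kscale_def smB_eq_mult[of c g])
  ultimately show ?case using step R.subspace_add[OF Rge_subspace] R.subspace_scale[OF Rge_subspace] by simp
qed

text \<open>Admissibility is where the ideal condition on \<open>a\<^sub>\<ge>\<^sub>j A\<close> enters: \<open>b x\<close> with \<open>x \<in> a\<^sub>\<ge>\<^sub>j\<close>
  lies again in \<open>a\<^sub>\<ge>\<^sub>j A\<close>.\<close>

lemma act_Rg_in_Rge: "g \<in> Rg n \<Longrightarrow> actR b g \<in> Rge n"
  unfolding grading_from_def
proof (induct rule: R.span_induct_alt)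
  case base then show ?case by (simp add: actR R.subspace_0[OF Rge_subspace])
next
  case (step c g' y)
  then obtain x m i where g': "g' = actR (f x) m" "i \<le> n" "x \<in> ga (nat (n - i))" "m \<in> h i" by auto
  let ?I = "B.span {f y * b' | y b'. y \<in> a_ge smA ga (nat (n - i))}"
  have "f x \<in> ?I" using ga_in_a_ge[OF g'(3)] by (intro B.span_base CollectI exI[of _ x] exI[of _ 1]) simp
  then have "b * f x \<in> ?I" using ideal unfolding two_sided_ideal_def by blast
  moreover have "m \<in> FR i" using g'(4) splitting_level.h_subset_FR[OF level] unfolding h_def by blast
  ultimately have "actR (b * f x) m \<in> Rge (i + int (nat (n - i)))" by (rule ideal_act_FR)
  then have "actR (b * f x) m \<in> Rge n" using g'(2) by simp
  then have "actR b g' \<in> Rge n" using g' by (simp add: actR)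
  then show ?case using step R.subspace_add[OF Rge_subspace] R.subspace_scale[OF Rge_subspace]
    by (simp add: actR actR_kR)
qed

lemma Rge_act: "v \<in> Rge j \<Longrightarrow> actR b v \<in> Rge j"
  unfolding Rge_span
proof (induct rule: R.span_induct_alt)
  case base then show ?case by (simp add: actR R.span_zero)
next
  case (step c g y)
  then obtain n where "j \<le> n" "g \<in> Rg n" by auto
  then have "actR b g \<in> R.span (\<Union>n\<in>{j..}. Rg n)"
    using act_Rg_in_Rge Rge_antimono Rge_span by blast
  then show ?case using step by (simp add: actR actR_kR R.span_add R.span_scale)
qed

lemma grading_admissible: "admissible_hybrid smA ga smB f actR Rg"
  unfolding admissible_hybrid_def hybrid_def
proof (intro conjI allI ballI R_mod grading_direct_decomp)
  show "actR (f x) m \<in> Rg (int j + i)" if "x \<in> ga j" "m \<in> Rg i" for j i x m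
    using ga_act_Rg that by blast
  show "submod actR UNIV (grade_ge smB actR Rg j)" for j
    unfolding submod_def Rge_def[symmetric]
    using Rge_act R.subspace_0[OF Rge_subspace] R.subspace_add[OF Rge_subspace] by blast
qed

lemma grading_morphism: "hybrid_morphism actR Rg actN GN \<phi>"
  unfolding hybrid_morphism_def
proof (intro conjI allI phi_hom image_subsetI)
  fix n v assume "v \<in> Rg n"
  then show "\<phi> v \<in> GN n" unfolding grading_from_def
  proof (induct rule: R.span_induct_alt)
    case base then show ?case using N.subspace_0[OF GN_subspace] by (simp add: phi_zero)
  next
    case (step c g y)
    then obtain x m i where g: "g = actR (f x) m" "i \<le> n" "x \<in> ga (nat (n - i))" "m \<in> h i" by auto
    have "\<phi> m \<in> GN i" using g(4) splitting_level.phi_h[OF level] unfolding h_def by blast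
    then have "\<phi> g \<in> GN n" using N_graded[OF g(3), of "\<phi> m" i] g(1,2) by (simp add: phi_act)
    then show ?case using step N.subspace_add[OF GN_subspace] N.subspace_scale[OF GN_subspace]
      by (simp add: phi_add phi_kR)
  qed
qed

lemma h_complement:
  "h i \<subseteq> FR i
   \<and> submod actR (f ` ga 0) (h i)
   \<and> h i \<inter> set_plus (FR (i + 1)) (rad_flat smA ga smB f actR (FR i)) = {0}
   \<and> set_plus (h i) (set_plus (FR (i + 1)) (rad_flat smA ga smB f actR (FR i))) = FR i
   \<and> \<phi> ` h i \<subseteq> GN i"
proof -
  interpret L: splitting_level smA ga smB f actR FR actN GN \<phi> i "rank i" "coord i" "lift i"
    by (rule level)
  show ?thesis using L.h_subset_FR L.h_submod L.h_inter_U L.h_plus_U L.phi_h unfolding h_def by blast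
qed

end

lemma filtered_coverI:
  assumes "setting smA ga smB f"
    and "A_module smB actR"
    and "\<forall>i. submod actR UNIV (FR i)"
    and "\<forall>i. FR (i + 1) \<subseteq> FR i"
    and "\<exists>i0. \<forall>i\<le>i0. FR i = UNIV"
    and "\<exists>i1. \<forall>i\<ge>i1. FR i = {0}"
    and "\<forall>i. projective_quotient ga f actR (FR i) (FR (i + 1))"
    and "admissible_hybrid smA ga smB f actN GN"
    and "A_hom actR actN \<phi>"
    and "\<forall>i. \<phi> ` FR i = grade_ge smB actN GN i"
  shows "filtered_cover smA ga smB f actR FR actN GN \<phi>"
proof (intro filtered_cover.intro graded_fd_algebra.intro filtered_cover_axioms.intro)
  show "vector_space smA" "direct_decomp smA ga" "1 \<in> ga 0" "vector_space smB"
    "\<exists>B. finite B \<and> module.span smA B = UNIV" "alg_hom smA smB f"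
    "\<forall>j. two_sided_ideal smB (module.span smB {f x * b | x b. x \<in> a_ge smA ga j})"
    using assms(1) unfolding setting_def k_algebra_def graded_algebra_def by auto
  show "x \<in> ga i \<Longrightarrow> y \<in> ga j \<Longrightarrow> x * y \<in> ga (i + j)" for i j x y
    using assms(1) unfolding setting_def graded_algebra_def by auto
  show "smA c (x * y) = smA c x * y" "smA c (x * y) = x * smA c y" for c x y
    using assms(1) unfolding setting_def k_algebra_def by blast+
  show "smB c (x' * y') = smB c x' * y'" "smB c (x' * y') = x' * smB c y'" for c x' y'
    using assms(1) unfolding setting_def k_algebra_def by blast+
qed (use assms in auto)

theorem proposition8p7:
  fixes smA :: "'k::field \<Rightarrow> 'a::ring_1 \<Rightarrow> 'a"
    and ga :: "nat \<Rightarrow> 'a set"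
    and smB :: "'k \<Rightarrow> 'b::ring_1 \<Rightarrow> 'b"
    and f :: "'a \<Rightarrow> 'b"
    and actR :: "'b \<Rightarrow> 'r::ab_group_add \<Rightarrow> 'r"
    and FR :: "int \<Rightarrow> 'r set"
    and actN :: "'b \<Rightarrow> 'n::ab_group_add \<Rightarrow> 'n"
    and GN :: "int \<Rightarrow> 'n set"
    and \<phi> :: "'r \<Rightarrow> 'n"
  assumes setting: "setting smA ga smB f"
    and R_mod: "A_module smB actR"
    and filt_sub: "\<forall>i. submod actR UNIV (FR i)"
    and filt_dec: "\<forall>i. FR (i + 1) \<subseteq> FR i"
    and filt_low: "\<exists>i0. \<forall>i\<le>i0. FR i = UNIV"
    and filt_high: "\<exists>i1. \<forall>i\<ge>i1. FR i = {0}"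
    and filt_proj: "\<forall>i. projective_quotient ga f actR (FR i) (FR (i + 1))"
    and N_adm: "admissible_hybrid smA ga smB f actN GN"
    and phi_hom: "A_hom actR actN \<phi>"
    and phi_surj: "surj \<phi>"
    and phi_filt: "\<forall>i. \<phi> ` FR i = grade_ge smB actN GN i"
  shows "\<exists>h :: int \<Rightarrow> 'r set.
           (\<forall>i. h i \<subseteq> FR i
              \<and> submod actR (f ` ga 0) (h i)
              \<and> h i \<inter> set_plus (FR (i + 1)) (rad_flat smA ga smB f actR (FR i)) = {0}
              \<and> set_plus (h i) (set_plus (FR (i + 1)) (rad_flat smA ga smB f actR (FR i))) = FR i
              \<and> \<phi> ` h i \<subseteq> GN i)
         \<and> admissible_hybrid smA ga smB f actR (grading_from ga smB f actR h)
         \<and> hybrid_morphism actR (grading_from ga smB f actR h) actN GN \<phi>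
         \<and> surj \<phi>"
proof -
  have cover: "filtered_cover smA ga smB f actR FR actN GN \<phi>"
    using filtered_coverI[OF setting R_mod filt_sub filt_dec filt_low filt_high filt_proj
        N_adm phi_hom phi_filt] .
  interpret filtered_cover smA ga smB f actR FR actN GN \<phi> by (rule cover)
  obtain rank coord lift where "\<And>i. graded_splitting i (rank i) (coord i) (lift i)"
    using graded_splitting_exists by metis
  then interpret graded_lift smA ga smB f actR FR actN GN \<phi> rank coord lift
    by (intro graded_lift.intro cover graded_lift_axioms.intro)
  show ?thesis
    using h_complement grading_admissible grading_morphism phi_surj by blast
qed

end
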